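(* The number of active faces without pre-image in the tower $(\mathcal{X}_{\alpha_s})_{s\ge0}$ is at most $n3^d$; that is, the number of active faces of $\square_{\alpha_0}$ plus, summed over all $s\ge0$, the number of active faces of $\square_{\alpha_{s+1}}$ that are not of the form $g_{\alpha_s}(f)$ for an active face $f$ of $\square_{\alpha_s}$, is at most $n3^d$.
   Context: Let $P\subset\mathbb{R}^d$ with $n=|P|$, and let $CP(P)$ be the closest-pair (Euclidean) distance of $P$. Scales $\alpha_s=\lambda2^s$ with $\lambda=CP(P)/(3d)$. Grids $G_{\alpha_s}\subset\mathbb{R}^d$: $G_{\alpha_0}=\lambda\mathbb{Z}^d$ and $G_{\alpha_{s+1}}=2(G_{\alpha_s}-O_s)+O_s+\frac{\alpha_s}{2}\varepsilon_s$ with $O_s\in G_{\alpha_s}$, $\varepsilon_s\in\{-1,1\}^d$. $\square_{\alpha_s}$: cubical complex of faces $\prod_j[x_j,x_j+m_j]$, $x\in G_{\alpha_s}$, $m_j\in\{0,\alpha_s\}$. $a_{\alpha_s}(p)$: the point of $G_{\alpha_s}$ whose Voronoi cell (closed cube of side $\alpha_s$ centered at it) contains $p$, assumed unique; active vertices $V_{\alpha_s}=a_{\alpha_s}(P)$. A face $f$ is spanned by $V$ if $f\cap V\ne\emptyset$ and $f\cap V$ lies in no facet of $f$; active faces are those spanned by $V_{\alpha_s}$. $g_{\alpha_s}$ maps $x\in G_{\alpha_s}$ to the unique $y\in G_{\alpha_{s+1}}$ whose Voronoi cell contains $x$, and a face to the convex hull of the images of its vertices (which maps active faces to active faces). $\mathcal{X}_{\alpha_s}$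 is the union over maximal active faces $f$ of the barycentric subdivisions of $f$, connected by the simplicial maps induced by $g$. *)

theory Defs
  imports "HOL-Analysis.Analysis"
begin

text \<open>Points live in \<open>real^'d\<close>, so the ambient dimension is \<open>d = CARD('d)\<close>.\<close>

definition CP :: "('a::metric_space) set \<Rightarrow> real" where
  "CP P = Min {dist p q | p q. p \<in> P \<and> q \<in> P \<and> p \<noteq> q}"

definition lam :: "(real^'d) set \<Rightarrow> real" where
  "lam P = CP P / (3 * real CARD('d))"

definition alph :: "(real^'d) set \<Rightarrow> nat \<Rightarrow> real" where
  "alph P s = lam P * 2 ^ s"

fun grid :: "(real^'d) set \<Rightarrow> (nat \<Rightarrow> real^'d) \<Rightarrow> (nat \<Rightarrow> real^'d) \<Rightarrow> nat \<Rightarrow> (real^'d) set" where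
  "grid P Or eps 0 = {x. \<forall>j. \<exists>k::int. x $ j = lam P * of_int k}"
| "grid P Or eps (Suc s) =
     (\<lambda>x. 2 *\<^sub>R (x - Or s) + Or s + (alph P s / 2) *\<^sub>R eps s) ` grid P Or eps s"

text \<open>Voronoi cell of a grid point \<open>c\<close> at scale \<open>a\<close>: closed cube of side \<open>a\<close> centred at \<open>c\<close>.\<close>
definition vcell :: "real \<Rightarrow> real^'d \<Rightarrow> (real^'d) set" where
  "vcell a c = {y. \<forall>j. \<bar>y $ j - c $ j\<bar> \<le> a / 2}"

definition nearest :: "(real^'d) set \<Rightarrow> real \<Rightarrow> real^'d \<Rightarrow> real^'d" where
  "nearest G a p = (THE c. c \<in> G \<and> p \<in> vcell a c)"

definition active_vertices :: "(real^'d) set \<Rightarrow> (nat \<Rightarrow> real^'d) \<Rightarrow> (nat \<Rightarrow> real^'d) \<Rightarrow> nat \<Rightarrow> (real^'d) set" where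
  "active_vertices P Or eps s = nearest (grid P Or eps s) (alph P s) ` P"

definition box_face :: "real^'d \<Rightarrow> real^'d \<Rightarrow> (real^'d) set" where
  "box_face x m = {y. \<forall>j. x $ j \<le> y $ j \<and> y $ j \<le> x $ j + m $ j}"

definition is_face :: "(real^'d) set \<Rightarrow> real \<Rightarrow> (real^'d) set \<Rightarrow> bool" where
  "is_face G a F \<longleftrightarrow> (\<exists>x m. x \<in> G \<and> (\<forall>j. m $ j = 0 \<or> m $ j = a) \<and> F = box_face x m)"

definition spanned :: "(real^'d) set \<Rightarrow> real \<Rightarrow> (real^'d) set \<Rightarrow> (real^'d) set \<Rightarrow> bool" where
  "spanned G a V F \<longleftrightarrow>
     (\<exists>x m. x \<in> G \<and> (\<forall>j. m $ j = 0 \<or> m $ j = a) \<and> F = box_face x m \<and>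
        F \<inter> V \<noteq> {} \<and>
        (\<forall>j. m $ j = a \<longrightarrow>
             \<not> (F \<inter> V \<subseteq> {y \<in> F. y $ j = x $ j}) \<and>
             \<not> (F \<inter> V \<subseteq> {y \<in> F. y $ j = x $ j + a})))"

definition active_faces :: "(real^'d) set \<Rightarrow> (nat \<Rightarrow> real^'d) \<Rightarrow> (nat \<Rightarrow> real^'d) \<Rightarrow> nat \<Rightarrow> (real^'d) set set" where
  "active_faces P Or eps s =
     {F. spanned (grid P Or eps s) (alph P s) (active_vertices P Or eps s) F}"

text \<open>\<open>g_{\<alpha>_s}\<close> on vertices and on faces (convex hull of the images of the vertices,
  the vertices of a face being its grid points).\<close>
definition gvert :: "(real^'d) set \<Rightarrow> (nat \<Rightarrow> real^'d) \<Rightarrow> (nat \<Rightarrow> real^'d) \<Rightarrow> nat \<Rightarrow> real^'d \<Rightarrow> real^'d" where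
  "gvert P Or eps s x = nearest (grid P Or eps (Suc s)) (alph P (Suc s)) x"

definition gface :: "(real^'d) set \<Rightarrow> (nat \<Rightarrow> real^'d) \<Rightarrow> (nat \<Rightarrow> real^'d) \<Rightarrow> nat \<Rightarrow> (real^'d) set \<Rightarrow> (real^'d) set" where
  "gface P Or eps s F = convex hull (gvert P Or eps s ` (F \<inter> grid P Or eps s))"

definition new_faces :: "(real^'d) set \<Rightarrow> (nat \<Rightarrow> real^'d) \<Rightarrow> (nat \<Rightarrow> real^'d) \<Rightarrow> nat \<Rightarrow> (real^'d) set set" where
  "new_faces P Or eps s =
     {F \<in> active_faces P Or eps (Suc s).
        \<not> (\<exists>f \<in> active_faces P Or eps s. gface P Or eps s f = F)}"

end

theory Submission
  imports Defs "HOL-Library.List_Lexorder"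
begin

(*
  Every face of the cubical complex at scale alpha_r that contains the vertex a_r(p) of a point
  p of P is the box spanned by a_r(p) and a_r(p) + alpha_r t for a direction t in {-1,0,1}^d.
  Charge a face counted at level r (an active face for r = 0, an active face without pre-image
  under g otherwise) to a pair (p, t) for which r is the first scale at which this box is active.
  The pair determines both r and the face, so at most n 3^d faces are counted.

  Such a pair exists by a descent argument.  If a_r(q) lies in the box of (p, t) at scale r, it
  does so at all larger scales.  For a new face F at scale s+1, the hyperplanes through the centre
  of F parallel to its facets are walls between Voronoi cells at every scale r <= s+1, so every
  point of P stays on one side of each of them.  Choose p with vertex in F minimising the distances
  of its vertices to the centre, lexicographically from scale s+1 down to 0.  If the box of (p, t)
  were active at some scale r <= s, either all its spanning witnesses lie across the central
  hyperplanes and stay there, so that the box is active at scale s and g maps it onto F, or some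
  witness is strictly closer to the centre from scale r on, contradicting the choice of p.
*)

lemma mult_of_int_trichotomy:
  fixes a :: real and k :: int
  assumes "0 < a"
  shows "a * of_int k \<le> - a \<or> a * of_int k = 0 \<or> a \<le> a * of_int k"
proof -
  consider "k \<le> -1" | "k = 0" | "1 \<le> k" by linarith
  then show ?thesis
  proof cases
    case 1
    then have "a * of_int k \<le> a * (-1)" using assms by (intro mult_left_mono) auto
    then show ?thesis by simp
  next
    case 3
    then have "a * 1 \<le> a * of_int k" using assms by (intro mult_left_mono) auto
    then show ?thesis by simp
  qed simp
qed

lemma convex_hull_box_vertices:
  fixes l u :: "'a::euclidean_space"
  assumes "\<forall>i\<in>Basis. l \<bullet> i \<le> u \<bullet> i"
  shows "convex hull {x. \<forall>i\<in>Basis. x \<bullet> i \<in> {l \<bullet> i, u \<bullet> i}} = cbox l u"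
proof -
  have "cbox l u = {x. \<forall>i\<in>Basis. x \<bullet> i \<in> {l \<bullet> i..u \<bullet> i}}"
    by (auto simp: cbox_def)
  also have "\<dots> = (\<Sum>i\<in>Basis. (\<lambda>x. x *\<^sub>R i) ` {l \<bullet> i..u \<bullet> i})"
    by (simp only: box_eq_set_sum_Basis)
  also have "\<dots> = (\<Sum>i\<in>Basis. (\<lambda>x. x *\<^sub>R i) ` (convex hull {l \<bullet> i, u \<bullet> i}))"
    using assms by (intro sum.cong) (simp_all add: convex_hull_eq_real_cbox)
  also have "\<dots> = (\<Sum>i\<in>Basis. convex hull ((\<lambda>x. x *\<^sub>R i) ` {l \<bullet> i, u \<bullet> i}))"
    by (simp add: convex_hull_linear_image)
  also have "\<dots> = convex hull {x. \<forall>i\<in>Basis. x \<bullet> i \<in> {l \<bullet> i, u \<bullet> i}}"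
    by (simp only: convex_hull_set_sum box_eq_set_sum_Basis)
  finally show ?thesis ..
qed

lemma convex_hull_box_vertices_cart:
  fixes l u :: "real^'n"
  assumes "\<forall>j. l $ j \<le> u $ j"
  shows "convex hull {x. \<forall>j. x $ j \<in> {l $ j, u $ j}} = {y. \<forall>j. l $ j \<le> y $ j \<and> y $ j \<le> u $ j}"
proof -
  have "convex hull {x. \<forall>j. x $ j \<in> {l $ j, u $ j}} =
        convex hull {x. \<forall>i\<in>Basis. x \<bullet> i \<in> {l \<bullet> i, u \<bullet> i}}"
    by (simp add: Basis_vec_def inner_axis)
  also have "\<dots> = cbox l u"
    using assms by (intro convex_hull_box_vertices) (simp add: Basis_vec_def inner_axis)
  also have "\<dots> = {y. \<forall>j. l $ j \<le> y $ j \<and> y $ j \<le> u $ j}"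
    by (auto simp: mem_box_cart)
  finally show ?thesis .
qed

lemma box_face_inj:
  assumes "\<forall>j. 0 \<le> m $ j" "\<forall>j. 0 \<le> m' $ j" "box_face x m = box_face x' m'"
  shows "x = x' \<and> m = m'"
proof -
  have "x \<in> box_face x m" "x + m \<in> box_face x m" "x' \<in> box_face x' m'" "x' + m' \<in> box_face x' m'"
    using assms(1,2) by (auto simp: box_face_def)
  then have "x \<in> box_face x' m'" "x + m \<in> box_face x' m'" "x' \<in> box_face x m" "x' + m' \<in> box_face x m"
    using assms(3) by simp_all
  then have "x' $ j \<le> x $ j" "x $ j \<le> x' $ j"
      "x $ j + m $ j \<le> x' $ j + m' $ j" "x' $ j + m' $ j \<le> x $ j + m $ j" for j
    unfolding box_face_def by auto
  then have "x $ j = x' $ j \<and> m $ j = m' $ j" for j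
    by (smt (verit))
  then show ?thesis by (simp add: vec_eq_iff)
qed

definition box_between :: "real^'n \<Rightarrow> real^'n \<Rightarrow> (real^'n) set" where
  "box_between a b = box_face (\<chi> j. min (a $ j) (b $ j)) (\<chi> j. \<bar>b $ j - a $ j\<bar>)"

lemma mem_box_between:
  "y \<in> box_between a b \<longleftrightarrow> (\<forall>j. min (a $ j) (b $ j) \<le> y $ j \<and> y $ j \<le> max (a $ j) (b $ j))"
proof -
  have "min x z + \<bar>z - x\<bar> = max x z" for x z :: real by (simp add: abs_if min_def max_def)
  then show ?thesis by (simp add: box_between_def box_face_def)
qed

lemma box_between_eq_hull: "box_between a b = convex hull {x. \<forall>j. x $ j \<in> {a $ j, b $ j}}"
proof -
  let ?l = "\<chi> j. min (a $ j) (b $ j)" and ?u = "\<chi> j. max (a $ j) (b $ j)"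
  have "convex hull {x. \<forall>j. x $ j \<in> {a $ j, b $ j}} = convex hull {x. \<forall>j. x $ j \<in> {?l $ j, ?u $ j}}"
    by (rule arg_cong[where f = "\<lambda>S. convex hull S"]) (auto simp: min_def max_def)
  also have "\<dots> = {y. \<forall>j. ?l $ j \<le> y $ j \<and> y $ j \<le> ?u $ j}"
    by (rule convex_hull_box_vertices_cart) (auto simp: min_def max_def)
  also have "\<dots> = box_between a b" by (auto simp: mem_box_between)
  finally show ?thesis ..
qed

lemma box_face_eq_box_betweenD:
  assumes "\<forall>j. 0 \<le> m $ j" "box_face x m = box_between a b"
  shows "x $ j = min (a $ j) (b $ j) \<and> m $ j = \<bar>b $ j - a $ j\<bar>"
  using box_face_inj[OF assms(1) _ assms(2)[unfolded box_between_def]] by simp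

lemma list_less_if_nth_le_less:
  fixes xs ys :: "'a::linorder list"
  assumes "length xs = length ys" "k < length xs" "\<forall>i\<le>k. xs ! i \<le> ys ! i" "xs ! k < ys ! k"
  shows "xs < ys"
  using assms
proof (induction xs arbitrary: ys k)
  case (Cons x xs)
  then obtain y ys' where ys: "ys = y # ys'" by (cases ys) auto
  have "x \<le> y" using Cons.prems(3) ys by force
  show ?case
  proof (cases k)
    case 0
    then show ?thesis using Cons.prems(4) ys by simp
  next
    case (Suc k')
    then have "xs < ys'" using Cons.prems ys by (intro Cons.IH[of ys' k']) auto
    then show ?thesis using \<open>x \<le> y\<close> ys by (cases "x < y") auto
  qed
qed simp

definition signs :: "(real^'d) set" where
  "signs = {t. \<forall>j. t $ j \<in> {-1, 0, 1}}"

lemma finite_signs: "finite (signs :: (real^'d) set)"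
  and card_signs: "card (signs :: (real^'d) set) = 3 ^ CARD('d)"
proof -
  have bij: "bij_betw vec_nth (signs :: (real^'d) set) (PiE UNIV (\<lambda>_. {-1, 0, 1}))"
    by (rule bij_betw_byWitness[where f' = vec_lambda]) (auto simp: signs_def PiE_iff)
  then show "finite (signs :: (real^'d) set)"
    by (simp add: bij_betw_finite finite_PiE)
  show "card (signs :: (real^'d) set) = 3 ^ CARD('d)"
    using bij_betw_same_card[OF bij] by (simp add: card_PiE numeral_3_eq_3)
qed

lemma signs_cases: "t \<in> signs \<Longrightarrow> t $ j = -1 \<or> t $ j = 0 \<or> t $ j = 1"
  by (simp add: signs_def)

locale tower =
  fixes P :: "(real^'d) set" and Or eps :: "nat \<Rightarrow> real^'d"
  assumes finite_P: "finite P" and card_P: "card P \<ge> 2"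
    and origin_in_grid: "\<forall>s. Or s \<in> grid P Or eps s"
    and eps_sign: "\<forall>s j. eps s $ j = 1 \<or> eps s $ j = -1"
    and snap_unique: "\<forall>s. \<forall>p\<in>P. \<exists>!c. c \<in> grid P Or eps s \<and> p \<in> vcell (alph P s) c"
begin

abbreviation "\<alpha> \<equiv> alph P"
abbreviation "G \<equiv> grid P Or eps"

lemma lam_pos: "0 < lam P"
proof -
  let ?D = "{dist p q | p q. p \<in> P \<and> q \<in> P \<and> p \<noteq> q}"
  have "\<not> card P \<le> Suc 0" using card_P by simp
  then obtain p q where "p \<in> P" "q \<in> P" "p \<noteq> q"
    using card_le_Suc0_iff_eq[OF finite_P] by blast
  then have "?D \<noteq> {}" by blast
  moreover have "?D \<subseteq> (\<lambda>(p, q). dist p q) ` (P \<times> P)" by auto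
  then have "finite ?D" using finite_P by (meson finite_SigmaI finite_imageI finite_subset)
  moreover have "\<forall>x\<in>?D. 0 < x" by auto
  ultimately have "0 < CP P" unfolding CP_def by simp
  then show ?thesis by (simp add: lam_def)
qed

lemma alpha_pos: "0 < \<alpha> r"
  using lam_pos by (simp add: alph_def)

lemma alpha_Suc: "\<alpha> (Suc r) = 2 * \<alpha> r"
  by (simp add: alph_def)

text \<open>\<open>offset r\<close> is the image of the origin of \<open>G 0\<close> in \<open>G r\<close>, so that
  \<open>G r = offset r + \<alpha> r \<int>\<^sup>d\<close>.\<close>
fun offset :: "nat \<Rightarrow> real^'d" where
  "offset 0 = 0"
| "offset (Suc r) = 2 *\<^sub>R offset r - Or r + (\<alpha> r / 2) *\<^sub>R eps r"

definition grid_coord :: "nat \<Rightarrow> 'd \<Rightarrow> real \<Rightarrow> bool" where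
  "grid_coord r j y \<longleftrightarrow> (\<exists>k::int. y = offset r $ j + \<alpha> r * of_int k)"

lemma grid_eq: "G r = {x. \<forall>j. grid_coord r j (x $ j)}"
proof (induction r)
  case 0
  show ?case by (auto simp: grid_coord_def alph_def)
next
  case (Suc r)
  let ?f = "\<lambda>x. 2 *\<^sub>R (x - Or r) + Or r + (\<alpha> r / 2) *\<^sub>R eps r"
  have "?f ` G r = {x. \<forall>j. grid_coord (Suc r) j (x $ j)}"
  proof safe
    fix x j assume "x \<in> G r"
    then obtain k where "x $ j = offset r $ j + \<alpha> r * of_int k"
      using Suc unfolding grid_coord_def by blast
    then show "grid_coord (Suc r) j (?f x $ j)"
      unfolding grid_coord_def by (intro exI[of _ k]) (simp add: alpha_Suc algebra_simps)
  next
    fix y assume "\<forall>j. grid_coord (Suc r) j (y $ j)"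
    then obtain k where k: "\<forall>j. y $ j = offset (Suc r) $ j + \<alpha> (Suc r) * of_int (k j)"
      unfolding grid_coord_def by metis
    define x where "x = (\<chi> j. offset r $ j + \<alpha> r * of_int (k j))"
    have "x \<in> G r" using Suc unfolding grid_coord_def x_def by auto
    moreover have "y = ?f x" using k by (simp add: vec_eq_iff x_def alpha_Suc algebra_simps)
    ultimately show "y \<in> ?f ` G r" by blast
  qed
  then show ?case by simp
qed

declare grid.simps(2)[simp del]

lemma grid_coord_diff:
  assumes "grid_coord r j y" "grid_coord r j z"
  shows "\<exists>k::int. z - y = \<alpha> r * of_int k"
proof -
  obtain k1 k2 where "y = offset r $ j + \<alpha> r * of_int k1" "z = offset r $ j + \<alpha> r * of_int k2"
    using assms unfolding grid_coord_def by blast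
  then have "z - y = \<alpha> r * of_int (k2 - k1)" by (simp add: algebra_simps)
  then show ?thesis by blast
qed

lemma grid_coord_add:
  assumes "grid_coord r j y"
  shows "grid_coord r j (y + \<alpha> r * of_int k)"
proof -
  obtain k1 where "y = offset r $ j + \<alpha> r * of_int k1"
    using assms unfolding grid_coord_def by blast
  then have "y + \<alpha> r * of_int k = offset r $ j + \<alpha> r * of_int (k1 + k)" by (simp add: algebra_simps)
  then show ?thesis unfolding grid_coord_def by blast
qed

lemma grid_coord_gap:
  assumes "grid_coord r j y" "grid_coord r j z"
  shows "z \<le> y - \<alpha> r \<or> z = y \<or> y + \<alpha> r \<le> z"
proof -
  obtain k where "z - y = \<alpha> r * of_int k" using grid_coord_diff[OF assms] by blast
  then show ?thesis using mult_of_int_trichotomy[OF alpha_pos, of r k] by auto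
qed

lemma grid_coord_Suc_down:
  assumes "grid_coord (Suc r) j y"
  shows "grid_coord r j (y - \<alpha> r / 2)"
proof -
  obtain k where k: "y = offset (Suc r) $ j + \<alpha> (Suc r) * of_int k"
    using assms unfolding grid_coord_def by blast
  obtain k0 where k0: "Or r $ j = offset r $ j + \<alpha> r * of_int k0"
    using origin_in_grid unfolding grid_eq grid_coord_def by blast
  consider "eps r $ j = 1" | "eps r $ j = -1" using eps_sign by blast
  then show ?thesis
  proof cases
    case 1
    then show ?thesis unfolding grid_coord_def
      by (intro exI[of _ "2 * k - k0"]) (simp add: k k0 alpha_Suc algebra_simps)
  next
    case 2
    then show ?thesis unfolding grid_coord_def
      by (intro exI[of _ "2 * k - k0 - 1"]) (simp add: k k0 alpha_Suc algebra_simps)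
  qed
qed

lemma grid_coord_Suc_up:
  assumes "grid_coord r j z"
  shows "grid_coord (Suc r) j (z + \<alpha> r / 2) \<or> grid_coord (Suc r) j (z - \<alpha> r / 2)"
proof -
  have "grid_coord r j (offset (Suc r) $ j - \<alpha> r / 2)"
    by (rule grid_coord_Suc_down) (auto simp: grid_coord_def intro: exI[of _ 0])
  then obtain k where k: "z - (offset (Suc r) $ j - \<alpha> r / 2) = \<alpha> r * of_int k"
    using grid_coord_diff[OF _ assms] by blast
  show ?thesis
  proof (cases "even k")
    case True
    then obtain m where "k = 2 * m" by blast
    then have "z + \<alpha> r / 2 = offset (Suc r) $ j + \<alpha> (Suc r) * of_int m"
      using k by (simp add: alpha_Suc algebra_simps)
    then show ?thesis unfolding grid_coord_def by blast
  next
    case False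
    then obtain m where "k = 2 * m + 1" using oddE by blast
    then have "z - \<alpha> r / 2 = offset (Suc r) $ j + \<alpha> (Suc r) * of_int m"
      using k by (simp add: alpha_Suc algebra_simps)
    then show ?thesis unfolding grid_coord_def by blast
  qed
qed

lemma grid_coord_Suc_near:
  assumes "grid_coord r j z" "grid_coord (Suc r) j y" "\<bar>y - z\<bar> < 3 * \<alpha> r / 2"
  shows "\<bar>y - z\<bar> = \<alpha> r / 2"
proof -
  have u: "grid_coord r j (y - \<alpha> r / 2)" by (rule grid_coord_Suc_down[OF assms(2)])
  have "grid_coord r j (y - \<alpha> r / 2 + \<alpha> r * of_int 1)" by (rule grid_coord_add[OF u])
  then have w: "grid_coord r j (y + \<alpha> r / 2)" by (simp add: add.commute)
  have "z \<le> y - \<alpha> r / 2 - \<alpha> r \<or> z = y - \<alpha> r / 2 \<or> y - \<alpha> r / 2 + \<alpha> r \<le> z"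
    by (rule grid_coord_gap[OF u assms(1)])
  moreover have "z \<le> y + \<alpha> r / 2 - \<alpha> r \<or> z = y + \<alpha> r / 2 \<or> y + \<alpha> r / 2 + \<alpha> r \<le> z"
    by (rule grid_coord_gap[OF w assms(1)])
  ultimately show ?thesis using assms(3) alpha_pos[of r] by linarith
qed

lemma grid_coord_Suc_unique:
  assumes "grid_coord r j z" "grid_coord (Suc r) j y" "grid_coord (Suc r) j y'"
    and "\<bar>y - z\<bar> \<le> \<alpha> r" "\<bar>y' - z\<bar> \<le> \<alpha> r"
  shows "y = y'"
proof -
  have "\<bar>y - z\<bar> = \<alpha> r / 2" "\<bar>y' - z\<bar> = \<alpha> r / 2"
    using grid_coord_Suc_near[OF assms(1)] assms(2-5) alpha_pos[of r] by auto
  then show ?thesis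
    using grid_coord_gap[OF assms(2,3)] alpha_Suc[of r] by linarith
qed

definition snap :: "nat \<Rightarrow> real^'d \<Rightarrow> real^'d" where
  "snap r p = nearest (G r) (\<alpha> r) p"

abbreviation "g \<equiv> gvert P Or eps"

lemma active_vertices_eq: "active_vertices P Or eps r = snap r ` P"
  by (simp add: active_vertices_def snap_def)

lemma snap_spec:
  assumes "p \<in> P"
  shows "snap r p \<in> G r \<and> p \<in> vcell (\<alpha> r) (snap r p)"
  unfolding snap_def nearest_def by (rule theI'[OF snap_unique[rule_format, OF assms]])

lemma snap_in_grid: "p \<in> P \<Longrightarrow> snap r p \<in> G r"
  using snap_spec by blast

lemma grid_coord_snap: "p \<in> P \<Longrightarrow> grid_coord r j (snap r p $ j)"
  using snap_in_grid grid_eq by blast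

text \<open>Uniqueness of the Voronoi cell containing \<open>p\<close> keeps \<open>p\<close> off the cell boundaries.\<close>
lemma snap_dist:
  assumes "p \<in> P"
  shows "\<bar>p $ j - snap r p $ j\<bar> < \<alpha> r / 2"
proof (rule ccontr)
  let ?c = "snap r p"
  assume "\<not> ?thesis"
  moreover have "\<bar>p $ j - ?c $ j\<bar> \<le> \<alpha> r / 2"
    using snap_spec[OF assms, where r = r] unfolding vcell_def by blast
  ultimately have eq: "\<bar>p $ j - ?c $ j\<bar> = \<alpha> r / 2" by linarith
  define c' where "c' = (\<chi> i. if i = j then 2 * p $ j - ?c $ j else ?c $ i)"
  have c'j: "c' $ j = ?c $ j + \<alpha> r * of_int 1 \<or> c' $ j = ?c $ j + \<alpha> r * of_int (-1)"
    using eq by (auto simp: c'_def abs_if split: if_splits)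
  have "grid_coord r i (c' $ i)" for i
  proof (cases "i = j")
    case True
    then show ?thesis using c'j grid_coord_add[OF grid_coord_snap[OF assms]] by metis
  qed (simp add: c'_def grid_coord_snap[OF assms])
  then have "c' \<in> G r" by (simp add: grid_eq)
  moreover have "p \<in> vcell (\<alpha> r) c'"
    using snap_spec[OF assms, where r = r] eq by (auto simp: vcell_def c'_def abs_minus_commute)
  moreover have "c' \<noteq> ?c"
  proof
    assume "c' = ?c"
    with c'j alpha_pos[of r] show False by auto
  qed
  ultimately show False
    using snap_unique[rule_format, OF assms, where s = r] snap_spec[OF assms, where r = r] by blast
qed

lemma snap_Suc_dist:
  assumes "p \<in> P"
  shows "\<bar>snap (Suc r) p $ j - snap r p $ j\<bar> = \<alpha> r / 2"
  using grid_coord_Suc_near[OF grid_coord_snap[OF assms] grid_coord_snap[OF assms], where r = r and j = j]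
    snap_dist[OF assms, where r = r and j = j] snap_dist[OF assms, where r = "Suc r" and j = j] alpha_Suc[of r]
  by linarith

lemma vcell_Suc_iff: "z \<in> vcell (\<alpha> (Suc r)) y \<longleftrightarrow> (\<forall>j. \<bar>y $ j - z $ j\<bar> \<le> \<alpha> r)"
  by (simp add: vcell_def alpha_Suc abs_minus_commute)

lemma gvert_unique:
  assumes "z \<in> G r"
  shows "\<exists>!y. y \<in> G (Suc r) \<and> z \<in> vcell (\<alpha> (Suc r)) y"
proof -
  have z: "grid_coord r j (z $ j)" for j using assms grid_eq by blast
  have "\<exists>y. grid_coord (Suc r) j y \<and> \<bar>y - z $ j\<bar> = \<alpha> r / 2" for j
  proof -
    consider "grid_coord (Suc r) j (z $ j + \<alpha> r / 2)" | "grid_coord (Suc r) j (z $ j - \<alpha> r / 2)"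
      using grid_coord_Suc_up[OF z] by blast
    then show ?thesis using alpha_pos[of r] by cases force+
  qed
  then obtain y where y: "\<And>j. grid_coord (Suc r) j (y j) \<and> \<bar>y j - z $ j\<bar> = \<alpha> r / 2"
    by metis
  show ?thesis
  proof
    have "\<bar>y j - z $ j\<bar> \<le> \<alpha> r" for j using y[of j] alpha_pos[of r] by linarith
    then have "z \<in> vcell (\<alpha> (Suc r)) (vec_lambda y)" by (simp add: vcell_Suc_iff)
    moreover have "vec_lambda y \<in> G (Suc r)" using y by (simp add: grid_eq)
    ultimately show "vec_lambda y \<in> G (Suc r) \<and> z \<in> vcell (\<alpha> (Suc r)) (vec_lambda y)" by blast
  next
    fix y' assume y': "y' \<in> G (Suc r) \<and> z \<in> vcell (\<alpha> (Suc r)) y'"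
    have "y' $ j = y j" for j
    proof (rule grid_coord_Suc_unique[OF z])
      show "grid_coord (Suc r) j (y' $ j)" using y' grid_eq by blast
      show "\<bar>y' $ j - z $ j\<bar> \<le> \<alpha> r" using y' vcell_Suc_iff by blast
      show "grid_coord (Suc r) j (y j)" "\<bar>y j - z $ j\<bar> \<le> \<alpha> r"
        using y[of j] alpha_pos[of r] by auto
    qed
    then show "y' = vec_lambda y" by (simp add: vec_eq_iff)
  qed
qed

lemma gvert_spec:
  assumes "z \<in> G r"
  shows "g r z \<in> G (Suc r)" "\<bar>g r z $ j - z $ j\<bar> = \<alpha> r / 2"
proof -
  have g: "g r z \<in> G (Suc r) \<and> z \<in> vcell (\<alpha> (Suc r)) (g r z)"
    unfolding gvert_def nearest_def by (rule theI'[OF gvert_unique[OF assms]])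
  then show "g r z \<in> G (Suc r)" by blast
  show "\<bar>g r z $ j - z $ j\<bar> = \<alpha> r / 2"
  proof (rule grid_coord_Suc_near)
    show "grid_coord r j (z $ j)" using assms grid_eq by blast
    show "grid_coord (Suc r) j (g r z $ j)" using g grid_eq by blast
    have "\<bar>g r z $ j - z $ j\<bar> \<le> \<alpha> r" using g vcell_Suc_iff by blast
    then show "\<bar>g r z $ j - z $ j\<bar> < 3 * \<alpha> r / 2" using alpha_pos[of r] by linarith
  qed
qed

lemma gvert_eqI:
  assumes "z \<in> G r" "y \<in> G (Suc r)" "\<forall>j. \<bar>y $ j - z $ j\<bar> \<le> \<alpha> r"
  shows "g r z = y"
  unfolding gvert_def nearest_def
  using assms by (intro the1_equality[OF gvert_unique]) (simp_all add: vcell_Suc_iff)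

lemma gvert_snap:
  assumes "p \<in> P"
  shows "g r (snap r p) = snap (Suc r) p"
proof (rule gvert_eqI)
  show "\<forall>j. \<bar>snap (Suc r) p $ j - snap r p $ j\<bar> \<le> \<alpha> r"
  proof
    fix j
    show "\<bar>snap (Suc r) p $ j - snap r p $ j\<bar> \<le> \<alpha> r"
      using snap_Suc_dist[OF assms, where r = r and j = j] alpha_pos[of r] by linarith
  qed
qed (use snap_in_grid assms in blast)+

lemma gvert_coord_cong:
  assumes "z \<in> G r" "z' \<in> G r" "z $ j = z' $ j"
  shows "g r z $ j = g r z' $ j"
proof (rule grid_coord_Suc_unique)
  show "grid_coord r j (z $ j)" using assms(1) grid_eq by blast
  show "grid_coord (Suc r) j (g r z $ j)" "grid_coord (Suc r) j (g r z' $ j)"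
    using gvert_spec(1) assms(1,2) grid_eq by blast+
  show "\<bar>g r z $ j - z $ j\<bar> \<le> \<alpha> r" "\<bar>g r z' $ j - z $ j\<bar> \<le> \<alpha> r"
    using gvert_spec(2)[OF assms(1), of j] gvert_spec(2)[OF assms(2), of j] assms(3) alpha_pos[of r]
    by simp_all
qed

definition face_at :: "nat \<Rightarrow> real^'d \<Rightarrow> real^'d \<Rightarrow> (real^'d) set" where
  "face_at r v t = box_between v (v + \<alpha> r *\<^sub>R t)"

definition face_corners :: "nat \<Rightarrow> real^'d \<Rightarrow> real^'d \<Rightarrow> (real^'d) set" where
  "face_corners r v t = {w. \<forall>j. w $ j \<in> {v $ j, v $ j + \<alpha> r * t $ j}}"

lemma face_at_eq_hull: "face_at r v t = convex hull face_corners r v t"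
  by (simp add: face_at_def face_corners_def box_between_eq_hull)

lemma face_corners_subset_grid:
  assumes "v \<in> G r" "t \<in> signs"
  shows "face_corners r v t \<subseteq> G r"
proof
  fix w assume w: "w \<in> face_corners r v t"
  have "grid_coord r j (w $ j)" for j
  proof -
    have v: "grid_coord r j (v $ j)" using assms(1) grid_eq by blast
    have "w $ j = v $ j + \<alpha> r * of_int 0 \<or> w $ j = v $ j + \<alpha> r * of_int 1 \<or>
          w $ j = v $ j + \<alpha> r * of_int (-1)"
      using w signs_cases[OF assms(2), of j] by (auto simp: face_corners_def)
    then show ?thesis using grid_coord_add[OF v] by metis
  qed
  then show "w \<in> G r" by (simp add: grid_eq)
qed

lemma face_at_inter_grid:
  assumes "v \<in> G r" "t \<in> signs"
  shows "face_at r v t \<inter> G r = face_corners r v t"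
proof (intro equalityI subsetI)
  fix w assume w: "w \<in> face_at r v t \<inter> G r"
  have "w $ j \<in> {v $ j, v $ j + \<alpha> r * t $ j}" for j
  proof -
    have "min (v $ j) (v $ j + \<alpha> r * t $ j) \<le> w $ j" "w $ j \<le> max (v $ j) (v $ j + \<alpha> r * t $ j)"
      using w by (auto simp: face_at_def mem_box_between)
    moreover have "w $ j \<le> v $ j - \<alpha> r \<or> w $ j = v $ j \<or> v $ j + \<alpha> r \<le> w $ j"
      using grid_coord_gap assms(1) w grid_eq by blast
    ultimately show ?thesis using signs_cases[OF assms(2), of j] alpha_pos[of r] by auto
  qed
  then show "w \<in> face_corners r v t" by (simp add: face_corners_def)
next
  fix w assume w: "w \<in> face_corners r v t"
  then have wj: "w $ j \<in> {v $ j, v $ j + \<alpha> r * t $ j}" for j by (simp add: face_corners_def)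
  have "min (v $ j) (v $ j + \<alpha> r * t $ j) \<le> w $ j \<and> w $ j \<le> max (v $ j) (v $ j + \<alpha> r * t $ j)"
    for j using wj[of j] by auto
  then have "w \<in> face_at r v t" by (simp add: face_at_def mem_box_between)
  then show "w \<in> face_at r v t \<inter> G r" using w face_corners_subset_grid[OF assms] by blast
qed

lemma box_face_eq_face_at:
  assumes "x \<in> G r" "\<forall>j. m $ j = 0 \<or> m $ j = \<alpha> r" "v \<in> G r" "v \<in> box_face x m"
  obtains t where "t \<in> signs" "box_face x m = face_at r v t"
proof
  define t :: "real^'d" where "t = (\<chi> j. if m $ j = 0 then 0 else if v $ j = x $ j then 1 else -1)"
  show "t \<in> signs" by (simp add: t_def signs_def)
  have "x $ j = min (v $ j) (v $ j + \<alpha> r * t $ j) \<and> m $ j = \<bar>\<alpha> r * t $ j\<bar>" for j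
  proof -
    have "x $ j \<le> v $ j" "v $ j \<le> x $ j + m $ j" using assms(4) by (auto simp: box_face_def)
    moreover have "v $ j \<le> x $ j - \<alpha> r \<or> v $ j = x $ j \<or> x $ j + \<alpha> r \<le> v $ j"
      using grid_coord_gap assms(1,3) grid_eq by blast
    ultimately show ?thesis using assms(2)[rule_format, of j] alpha_pos[of r] by (auto simp: t_def)
  qed
  then have "x = (\<chi> j. min (v $ j) (v $ j + \<alpha> r * t $ j))" "m = (\<chi> j. \<bar>\<alpha> r * t $ j\<bar>)"
    by (simp_all add: vec_eq_iff)
  then show "box_face x m = face_at r v t" by (simp add: face_at_def box_between_def)
qed

lemma face_at_eq_box_face:
  "face_at r v t = box_face (\<chi> j. min (v $ j) (v $ j + \<alpha> r * t $ j)) (\<chi> j. \<bar>\<alpha> r * t $ j\<bar>)"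
  by (simp add: face_at_def box_between_def)

lemma face_at_inter_active_vertices:
  assumes "p \<in> P" "t \<in> signs"
  shows "face_at r (snap r p) t \<inter> snap r ` P = face_corners r (snap r p) t \<inter> snap r ` P"
  using face_at_inter_grid[OF snap_in_grid[OF assms(1)] assms(2)] snap_in_grid by blast

lemma active_face_at_witness:
  assumes "p \<in> P" "t \<in> signs" "face_at r (snap r p) t \<in> active_faces P Or eps r" "t $ j \<noteq> 0"
  obtains q where "q \<in> P" "snap r q \<in> face_corners r (snap r p) t" "snap r q $ j \<noteq> snap r p $ j"
proof -
  let ?v = "snap r p" and ?V = "snap r ` P" and ?F = "face_at r (snap r p) t"
  obtain x m where m: "\<forall>j. m $ j = 0 \<or> m $ j = \<alpha> r" and F: "?F = box_face x m"
    and facets: "\<forall>j. m $ j = \<alpha> r \<longrightarrow> \<not> ?F \<inter> ?V \<subseteq> {y \<in> ?F. y $ j = x $ j} \<and>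
                                    \<not> ?F \<inter> ?V \<subseteq> {y \<in> ?F. y $ j = x $ j + \<alpha> r}"
    using assms(3) unfolding active_faces_def spanned_def active_vertices_eq mem_Collect_eq by blast
  have m0: "\<forall>j. 0 \<le> m $ j" using m alpha_pos[of r] by (metis order.refl less_imp_le)
  have "x $ j = min (?v $ j) (?v $ j + \<alpha> r * t $ j) \<and> m $ j = \<bar>\<alpha> r * t $ j\<bar>"
    using box_face_eq_box_betweenD[OF m0 F[unfolded face_at_def, symmetric], of j] by simp
  then have mj: "m $ j = \<alpha> r" and "?v $ j = x $ j \<or> ?v $ j = x $ j + \<alpha> r"
    using assms(4) signs_cases[OF assms(2), of j] alpha_pos[of r] by auto
  then have "\<exists>w\<in>?F \<inter> ?V. w $ j \<noteq> ?v $ j"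
    using facets[rule_format, OF mj] by auto
  then show ?thesis
    using that face_at_inter_active_vertices[OF assms(1,2)] by blast
qed

lemma active_face_atI:
  assumes "p \<in> P" "t \<in> signs"
    and "\<forall>j. t $ j \<noteq> 0 \<longrightarrow> (\<exists>q\<in>P. snap r q \<in> face_corners r (snap r p) t \<and> snap r q $ j \<noteq> snap r p $ j)"
  shows "face_at r (snap r p) t \<in> active_faces P Or eps r"
proof -
  let ?v = "snap r p" and ?V = "snap r ` P" and ?F = "face_at r (snap r p) t"
  let ?x = "\<chi> j. min (?v $ j) (?v $ j + \<alpha> r * t $ j)" and ?m = "\<chi> j. \<bar>\<alpha> r * t $ j\<bar>"
  have FV: "?F \<inter> ?V = face_corners r ?v t \<inter> ?V" by (rule face_at_inter_active_vertices[OF assms(1,2)])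
  have vFV: "?v \<in> ?F \<inter> ?V" using FV assms(1) by (simp add: face_corners_def)
  show ?thesis
    unfolding active_faces_def active_vertices_eq spanned_def mem_Collect_eq
  proof (intro exI conjI allI impI)
    have "?x \<in> face_corners r ?v t" by (simp add: face_corners_def min_def)
    then show "?x \<in> G r"
      using face_corners_subset_grid[OF snap_in_grid[OF assms(1)] assms(2)] by blast
    show "?m $ j = 0 \<or> ?m $ j = \<alpha> r" for j
      using signs_cases[OF assms(2), of j] alpha_pos[of r] by auto
    show "?F = box_face ?x ?m" by (rule face_at_eq_box_face)
    show "?F \<inter> ?V \<noteq> {}" using vFV by blast
    fix j assume "?m $ j = \<alpha> r"
    then have "t $ j \<noteq> 0" using alpha_pos[of r] by auto
    then obtain q where q: "q \<in> P" "snap r q \<in> face_corners r ?v t" "snap r q $ j \<noteq> ?v $ j"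
      using assms(3) by blast
    have qFV: "snap r q \<in> ?F \<inter> ?V" using q FV by blast
    have no_facet: "\<not> ?F \<inter> ?V \<subseteq> {y \<in> ?F. y $ j = b}" for b
    proof
      assume "?F \<inter> ?V \<subseteq> {y \<in> ?F. y $ j = b}"
      then have "snap r q $ j = b" "?v $ j = b" using qFV vFV by blast+
      with q(3) show False by simp
    qed
    show "\<not> ?F \<inter> ?V \<subseteq> {y \<in> ?F. y $ j = ?x $ j}" "\<not> ?F \<inter> ?V \<subseteq> {y \<in> ?F. y $ j = ?x $ j + \<alpha> r}"
      by (rule no_facet)+
  qed
qed

lemma active_face_nonempty: "F \<in> active_faces P Or eps r \<Longrightarrow> \<exists>p\<in>P. snap r p \<in> F"
  by (auto simp: active_faces_def spanned_def active_vertices_eq)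

lemma active_face_eq_face_at:
  assumes "F \<in> active_faces P Or eps r" "p \<in> P" "snap r p \<in> F"
  obtains t where "t \<in> signs" "F = face_at r (snap r p) t"
proof -
  obtain x m where "x \<in> G r" "\<forall>j. m $ j = 0 \<or> m $ j = \<alpha> r" "F = box_face x m"
    using assms(1) by (auto simp: active_faces_def spanned_def)
  then show ?thesis
    using box_face_eq_face_at snap_in_grid[OF assms(2)] assms(3) that by metis
qed

lemma snap_face_corners_Suc:
  assumes "p \<in> P" "q \<in> P" "t \<in> signs" "snap r q \<in> face_corners r (snap r p) t"
  shows "snap (Suc r) q \<in> face_corners (Suc r) (snap (Suc r) p) t"
proof -
  have "snap (Suc r) q $ j = snap (Suc r) p $ j \<or> snap (Suc r) q $ j = snap (Suc r) p $ j + \<alpha> (Suc r) * t $ j"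
    for j
  proof -
    have "snap r q $ j = snap r p $ j \<or> snap r q $ j = snap r p $ j + \<alpha> r * t $ j"
      using assms(4) by (simp add: face_corners_def)
    moreover have "snap (Suc r) q $ j \<le> snap (Suc r) p $ j - \<alpha> (Suc r) \<or>
        snap (Suc r) q $ j = snap (Suc r) p $ j \<or> snap (Suc r) p $ j + \<alpha> (Suc r) \<le> snap (Suc r) q $ j"
      using grid_coord_gap grid_coord_snap assms(1,2) by blast
    moreover have "\<bar>snap (Suc r) p $ j - snap r p $ j\<bar> = \<alpha> r / 2" "\<bar>snap (Suc r) q $ j - snap r q $ j\<bar> = \<alpha> r / 2"
      using snap_Suc_dist assms(1,2) by blast+
    moreover have "\<alpha> r * t $ j = - \<alpha> r \<or> \<alpha> r * t $ j = 0 \<or> \<alpha> r * t $ j = \<alpha> r"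
      using signs_cases[OF assms(3), of j] by auto
    moreover have "\<alpha> (Suc r) * t $ j = 2 * (\<alpha> r * t $ j)" by (simp add: alpha_Suc)
    ultimately show ?thesis using alpha_pos[of r] alpha_Suc[of r] by arith
  qed
  then show ?thesis by (simp add: face_corners_def)
qed

lemma snap_face_corners_mono:
  assumes "p \<in> P" "q \<in> P" "t \<in> signs" "snap r q \<in> face_corners r (snap r p) t" "r \<le> r'"
  shows "snap r' q \<in> face_corners r' (snap r' p) t"
  using assms(5,4) by (induction r' rule: dec_induct) (auto intro: snap_face_corners_Suc[OF assms(1-3)])

lemma gvert_coord_far:
  assumes p: "p \<in> P"
    and wit: "\<forall>j. t $ j \<noteq> 0 \<longrightarrow> (\<exists>q\<in>P. snap s q $ j = snap s p $ j + \<alpha> s * t $ j \<and>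
                  snap (Suc s) q $ j = snap (Suc s) p $ j + \<alpha> (Suc s) * t $ j)"
    and z: "z \<in> G s" "z $ j = snap s p $ j + \<alpha> s * t $ j"
  shows "g s z $ j = snap (Suc s) p $ j + \<alpha> (Suc s) * t $ j"
proof (cases "t $ j = 0")
  case True
  then show ?thesis
    using gvert_coord_cong[OF z(1) snap_in_grid[OF p]] z(2) gvert_snap[OF p] by simp
next
  case False
  then obtain q where q: "q \<in> P" "snap s q $ j = snap s p $ j + \<alpha> s * t $ j"
    "snap (Suc s) q $ j = snap (Suc s) p $ j + \<alpha> (Suc s) * t $ j" using wit by blast
  have "g s z $ j = g s (snap s q) $ j"
    using gvert_coord_cong[OF z(1) snap_in_grid[OF q(1)]] z(2) q(2) by simp
  then show ?thesis using gvert_snap[OF q(1)] q(3) by simp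
qed

lemma gvert_image_face_corners:
  assumes p: "p \<in> P" and t: "t \<in> signs"
    and wit: "\<forall>j. t $ j \<noteq> 0 \<longrightarrow> (\<exists>q\<in>P. snap s q $ j = snap s p $ j + \<alpha> s * t $ j \<and>
                  snap (Suc s) q $ j = snap (Suc s) p $ j + \<alpha> (Suc s) * t $ j)"
  shows "g s ` face_corners s (snap s p) t = face_corners (Suc s) (snap (Suc s) p) t"
proof -
  let ?v = "snap s p" and ?v' = "snap (Suc s) p"
  have v: "?v \<in> G s" by (rule snap_in_grid[OF p])
  have C: "face_corners s ?v t \<subseteq> G s" by (rule face_corners_subset_grid[OF v t])
  have near: "g s z $ j = ?v' $ j" if "z \<in> G s" "z $ j = ?v $ j" for z j
    using gvert_coord_cong[OF that(1) v that(2)] gvert_snap[OF p] by simp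
  note far = gvert_coord_far[OF p wit]
  show ?thesis
  proof (intro equalityI subsetI)
    fix w assume "w \<in> g s ` face_corners s ?v t"
    then obtain z where z: "z \<in> face_corners s ?v t" and w: "w = g s z" by blast
    have "z $ j = ?v $ j \<or> z $ j = ?v $ j + \<alpha> s * t $ j" for j
      using z by (simp add: face_corners_def)
    then have "g s z $ j = ?v' $ j \<or> g s z $ j = ?v' $ j + \<alpha> (Suc s) * t $ j" for j
      using near far z C by blast
    then show "w \<in> face_corners (Suc s) ?v' t" by (simp add: w face_corners_def)
  next
    fix w assume w: "w \<in> face_corners (Suc s) ?v' t"
    define z where "z = (\<chi> j. if w $ j = ?v' $ j then ?v $ j else ?v $ j + \<alpha> s * t $ j)"
    have z: "z \<in> face_corners s ?v t" by (simp add: z_def face_corners_def)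
    then have zG: "z \<in> G s" using C by blast
    have "g s z $ j = w $ j" for j
    proof (cases "w $ j = ?v' $ j")
      case True
      then have "z $ j = ?v $ j" by (simp add: z_def)
      then show ?thesis using near[OF zG] True by simp
    next
      case False
      have "z $ j = ?v $ j + \<alpha> s * t $ j" using False by (simp add: z_def)
      moreover have "w $ j = ?v' $ j + \<alpha> (Suc s) * t $ j"
        using w False unfolding face_corners_def by blast
      ultimately show ?thesis using far[OF zG] by simp
    qed
    then have "w = g s z" by (simp add: vec_eq_iff)
    then show "w \<in> g s ` face_corners s ?v t" using z by blast
  qed
qed

lemma gface_face_at:
  assumes "p \<in> P" "t \<in> signs"
    and "\<forall>j. t $ j \<noteq> 0 \<longrightarrow> (\<exists>q\<in>P. snap s q $ j = snap s p $ j + \<alpha> s * t $ j \<and>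
                  snap (Suc s) q $ j = snap (Suc s) p $ j + \<alpha> (Suc s) * t $ j)"
  shows "gface P Or eps s (face_at s (snap s p) t) = face_at (Suc s) (snap (Suc s) p) t"
proof -
  have "gface P Or eps s (face_at s (snap s p) t) = convex hull (g s ` face_corners s (snap s p) t)"
    by (simp add: gface_def face_at_inter_grid[OF snap_in_grid[OF assms(1)] assms(2)])
  also have "\<dots> = face_at (Suc s) (snap (Suc s) p) t"
    by (simp add: gvert_image_face_corners[OF assms] face_at_eq_hull)
  finally show ?thesis .
qed

text \<open>The hyperplane \<open>y\<^sub>j = b\<close> lies halfway between two grid coordinates, so it
  separates Voronoi cells of \<open>G r\<close>.\<close>
definition cell_wall :: "nat \<Rightarrow> 'd \<Rightarrow> real \<Rightarrow> bool" where
  "cell_wall r j b \<longleftrightarrow> grid_coord r j (b - \<alpha> r / 2)"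

lemma cell_wall_Suc:
  assumes "cell_wall (Suc r) j b"
  shows "cell_wall r j b"
proof -
  have "grid_coord (Suc r) j (b - \<alpha> r)" using assms by (simp add: cell_wall_def alpha_Suc)
  then have "grid_coord r j (b - \<alpha> r - \<alpha> r / 2)" by (rule grid_coord_Suc_down)
  then have "grid_coord r j (b - \<alpha> r - \<alpha> r / 2 + \<alpha> r * of_int 1)" by (rule grid_coord_add)
  moreover have "b - \<alpha> r - \<alpha> r / 2 + \<alpha> r * of_int 1 = b - \<alpha> r / 2" by simp
  ultimately show ?thesis by (simp add: cell_wall_def)
qed

lemma cell_wall_le:
  assumes "cell_wall s j b" "r \<le> s"
  shows "cell_wall r j b"
  using assms(2,1) by (induction rule: inc_induct) (auto intro: cell_wall_Suc)

lemma snap_side: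
  assumes "p \<in> P" "cell_wall r j b" "\<sigma> = -1 \<or> \<sigma> = 1" "0 < \<sigma> * (b - p $ j)"
  shows "\<alpha> r / 2 \<le> \<sigma> * (b - snap r p $ j)"
proof -
  have "snap r p $ j \<le> b - \<alpha> r / 2 - \<alpha> r \<or> snap r p $ j = b - \<alpha> r / 2 \<or>
      b - \<alpha> r / 2 + \<alpha> r \<le> snap r p $ j"
    by (rule grid_coord_gap[OF assms(2)[unfolded cell_wall_def] grid_coord_snap[OF assms(1)]])
  then show ?thesis using assms(3,4) snap_dist[OF assms(1), of j r] alpha_pos[of r] by (auto; arith)
qed

end

locale new_face = tower P Or eps for P :: "(real^'d) set" and Or eps +
  fixes s :: nat and c m :: "real^'d"
  assumes corner_in_grid: "c \<in> G (Suc s)"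
    and extent: "\<forall>j. m $ j = 0 \<or> m $ j = \<alpha> (Suc s)"
    and new: "box_face c m \<in> new_faces P Or eps s"
begin

text \<open>The centre of the face in the coordinates \<open>j\<close> with \<open>m $ j \<noteq> 0\<close>, the only ones used.\<close>
definition mid :: "'d \<Rightarrow> real" where
  "mid j = c $ j + \<alpha> s"

definition anchored :: "real^'d \<Rightarrow> real^'d \<Rightarrow> bool" where
  "anchored p t \<longleftrightarrow> p \<in> P \<and> t \<in> signs \<and> box_face c m = face_at (Suc s) (snap (Suc s) p) t"

definition face_points :: "(real^'d) set" where
  "face_points = {q \<in> P. snap (Suc s) q \<in> box_face c m}"

definition dist_mid :: "nat \<Rightarrow> real^'d \<Rightarrow> real" where
  "dist_mid r q = (\<Sum>j | m $ j \<noteq> 0. \<bar>snap r q $ j - mid j\<bar>)"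

text \<open>Compared lexicographically, scale \<open>Suc s\<close> first.\<close>
definition profile :: "real^'d \<Rightarrow> real list" where
  "profile q = map (\<lambda>k. dist_mid (Suc s - k) q) [0..<Suc (Suc s)]"

lemma mid_cell_wall:
  assumes "r \<le> Suc s"
  shows "cell_wall r j (mid j)"
proof (rule cell_wall_le[OF _ assms])
  have "grid_coord (Suc s) j (c $ j)" using corner_in_grid grid_eq by blast
  then show "cell_wall (Suc s) j (mid j)" by (simp add: cell_wall_def mid_def alpha_Suc)
qed

lemma anchored_extent:
  assumes "anchored p t"
  shows "c $ j = min (snap (Suc s) p $ j) (snap (Suc s) p $ j + \<alpha> (Suc s) * t $ j)"
    "m $ j \<noteq> 0 \<longleftrightarrow> t $ j \<noteq> 0"
proof -
  have m0: "\<forall>j. 0 \<le> m $ j" using extent alpha_pos by (metis order.refl less_imp_le)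
  have "box_face c m = box_between (snap (Suc s) p) (snap (Suc s) p + \<alpha> (Suc s) *\<^sub>R t)"
    using assms by (simp add: anchored_def face_at_def)
  from box_face_eq_box_betweenD[OF m0 this, of j]
  have "c $ j = min (snap (Suc s) p $ j) (snap (Suc s) p $ j + \<alpha> (Suc s) * t $ j) \<and>
      m $ j = \<bar>\<alpha> (Suc s) * t $ j\<bar>"
    by simp
  then show "c $ j = min (snap (Suc s) p $ j) (snap (Suc s) p $ j + \<alpha> (Suc s) * t $ j)"
    "m $ j \<noteq> 0 \<longleftrightarrow> t $ j \<noteq> 0"
    using alpha_pos[of "Suc s"] by auto
qed

lemma anchored_side:
  assumes "anchored p t" "t $ j \<noteq> 0" "r \<le> Suc s"
  shows "\<alpha> r / 2 \<le> t $ j * (mid j - snap r p $ j)"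
proof (rule snap_side[OF _ mid_cell_wall[OF assms(3)]])
  show "p \<in> P" "t $ j = -1 \<or> t $ j = 1"
    using assms(1,2) signs_cases by (auto simp: anchored_def)
  then show "0 < t $ j * (mid j - p $ j)"
    using anchored_extent(1)[OF assms(1), of j] snap_dist[of p j "Suc s"]
    by (auto simp: mid_def alpha_Suc)
qed

lemma anchored_closer:
  assumes "anchored p t" "q \<in> P" "snap r q \<in> face_corners r (snap r p) t"
    and "r \<le> r'" "r' \<le> Suc s" "t $ j \<noteq> 0"
  shows "\<bar>snap r' q $ j - mid j\<bar> \<le> \<bar>snap r' p $ j - mid j\<bar>"
    and "snap r' q $ j \<noteq> snap r' p $ j \<Longrightarrow> \<bar>snap r' p $ j - mid j\<bar> \<noteq> \<alpha> r' / 2 \<Longrightarrow>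
      \<bar>snap r' q $ j - mid j\<bar> < \<bar>snap r' p $ j - mid j\<bar>"
proof -
  have p: "p \<in> P" "t \<in> signs" using assms(1) by (auto simp: anchored_def)
  have "snap r' q $ j = snap r' p $ j \<or> snap r' q $ j = snap r' p $ j + \<alpha> r' * t $ j"
    using snap_face_corners_mono[OF p(1) assms(2) p(2) assms(3,4)] by (simp add: face_corners_def)
  moreover have "\<alpha> r' / 2 \<le> t $ j * (mid j - snap r' p $ j)"
    by (rule anchored_side[OF assms(1,6,5)])
  moreover have "t $ j = -1 \<or> t $ j = 1" using signs_cases[OF p(2), of j] assms(6) by auto
  ultimately show "\<bar>snap r' q $ j - mid j\<bar> \<le> \<bar>snap r' p $ j - mid j\<bar>"
    and "snap r' q $ j \<noteq> snap r' p $ j \<Longrightarrow> \<bar>snap r' p $ j - mid j\<bar> \<noteq> \<alpha> r' / 2 \<Longrightarrow>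
      \<bar>snap r' q $ j - mid j\<bar> < \<bar>snap r' p $ j - mid j\<bar>"
    using alpha_pos[of r'] by (auto; arith)+
qed

lemma dist_mid_le:
  assumes "anchored p t" "q \<in> P" "snap r q \<in> face_corners r (snap r p) t"
    and "r \<le> r'" "r' \<le> Suc s"
  shows "dist_mid r' q \<le> dist_mid r' p"
  unfolding dist_mid_def
  by (rule sum_mono) (simp add: anchored_closer(1)[OF assms] anchored_extent(2)[OF assms(1)])

lemma profile_less:
  assumes "anchored p t" "q \<in> P" "snap r q \<in> face_corners r (snap r p) t" "r \<le> Suc s"
    and "t $ i \<noteq> 0" "snap r q $ i \<noteq> snap r p $ i" "\<bar>snap r p $ i - mid i\<bar> \<noteq> \<alpha> r / 2"
  shows "profile q < profile p"
proof (rule list_less_if_nth_le_less[where k = "Suc s - r"])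
  have nth: "profile x ! k = dist_mid (Suc s - k) x" if "k \<le> Suc s" for x k
    using that by (simp add: profile_def nth_append del: upt_Suc)
  show "length (profile q) = length (profile p)" "Suc s - r < length (profile q)"
    by (simp_all add: profile_def)
  show "\<forall>k\<le>Suc s - r. profile q ! k \<le> profile p ! k"
    using dist_mid_le[OF assms(1-3)] assms(4) by (simp add: nth)
  have "dist_mid r q < dist_mid r p"
    unfolding dist_mid_def
  proof (rule sum_strict_mono_ex1)
    show "\<forall>j\<in>{j. m $ j \<noteq> 0}. \<bar>snap r q $ j - mid j\<bar> \<le> \<bar>snap r p $ j - mid j\<bar>"
      using anchored_closer(1)[OF assms(1-3) order.refl assms(4)] anchored_extent(2)[OF assms(1)]
      by simp
    show "\<exists>j\<in>{j. m $ j \<noteq> 0}. \<bar>snap r q $ j - mid j\<bar> < \<bar>snap r p $ j - mid j\<bar>"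
      using anchored_closer(2)[OF assms(1-3) order.refl assms(4,5,6,7)] anchored_extent(2)[OF assms(1)]
        assms(5) by blast
  qed simp
  then show "profile q ! (Suc s - r) < profile p ! (Suc s - r)"
    using assms(4) by (simp add: nth)
qed

lemma anchored_crossing:
  assumes "anchored p t" "q \<in> P" "snap r q \<in> face_corners r (snap r p) t" "t $ j \<noteq> 0"
    and "snap r q $ j \<noteq> snap r p $ j" "\<bar>snap r p $ j - mid j\<bar> = \<alpha> r / 2" "r \<le> r'" "r' \<le> Suc s"
  shows "snap r' q $ j = snap r' p $ j + \<alpha> r' * t $ j"
proof -
  have p: "p \<in> P" "t \<in> signs" using assms(1) by (auto simp: anchored_def)
  have t: "t $ j = -1 \<or> t $ j = 1" using signs_cases[OF p(2), of j] assms(4) by auto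
  have "snap r q $ j = snap r p $ j + \<alpha> r * t $ j"
    using assms(3,5) unfolding face_corners_def by blast
  moreover have "\<alpha> r / 2 \<le> t $ j * (mid j - snap r p $ j)"
    using anchored_side[OF assms(1,4)] assms(7,8) by simp
  ultimately have "0 < - t $ j * (mid j - q $ j)"
    using t assms(6) snap_dist[OF assms(2), of j r] alpha_pos[of r] by (auto; arith)
  then have "\<alpha> r' / 2 \<le> - t $ j * (mid j - snap r' q $ j)"
    by (intro snap_side[OF assms(2) mid_cell_wall[OF assms(8)]]) (use t in auto)
  moreover have "\<alpha> r' / 2 \<le> t $ j * (mid j - snap r' p $ j)"
    by (rule anchored_side[OF assms(1,4,8)])
  moreover have "snap r' q $ j = snap r' p $ j \<or> snap r' q $ j = snap r' p $ j + \<alpha> r' * t $ j"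
    using snap_face_corners_mono[OF p(1) assms(2) p(2) assms(3,7)] by (simp add: face_corners_def)
  ultimately show ?thesis using alpha_pos[of r'] by auto
qed

lemma preimage_if_centred:
  assumes "anchored p t" "r \<le> s" "face_at r (snap r p) t \<in> active_faces P Or eps r"
    and "\<forall>j. t $ j \<noteq> 0 \<longrightarrow> \<bar>snap r p $ j - mid j\<bar> = \<alpha> r / 2"
  shows "face_at s (snap s p) t \<in> active_faces P Or eps s"
    and "gface P Or eps s (face_at s (snap s p) t) = box_face c m"
proof -
  have p: "p \<in> P" "t \<in> signs" using assms(1) by (auto simp: anchored_def)
  have cross: "\<exists>q\<in>P. snap s q \<in> face_corners s (snap s p) t \<and>
      snap s q $ j = snap s p $ j + \<alpha> s * t $ j \<and> snap (Suc s) q $ j = snap (Suc s) p $ j + \<alpha> (Suc s) * t $ j"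
    if tj: "t $ j \<noteq> 0" for j
  proof -
    obtain q where q: "q \<in> P" "snap r q \<in> face_corners r (snap r p) t" "snap r q $ j \<noteq> snap r p $ j"
      by (rule active_face_at_witness[OF p assms(3) tj])
    show ?thesis
      using q(1) snap_face_corners_mono[OF p(1) q(1) p(2) q(2) assms(2)]
        anchored_crossing[OF assms(1) q(1,2) tj q(3) assms(4)[rule_format, OF tj]] assms(2)
      by auto
  qed
  show "face_at s (snap s p) t \<in> active_faces P Or eps s"
  proof (rule active_face_atI[OF p], intro allI impI)
    fix j assume "t $ j \<noteq> 0"
    then show "\<exists>q\<in>P. snap s q \<in> face_corners s (snap s p) t \<and> snap s q $ j \<noteq> snap s p $ j"
      using cross alpha_pos[of s] by fastforce
  qed
  have "gface P Or eps s (face_at s (snap s p) t) = face_at (Suc s) (snap (Suc s) p) t"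
    using cross by (intro gface_face_at[OF p]) blast
  then show "gface P Or eps s (face_at s (snap s p) t) = box_face c m"
    using assms(1) by (simp add: anchored_def)
qed

lemma not_active_if_profile_min:
  assumes "anchored p t" "\<not> (\<exists>q\<in>face_points. profile q < profile p)" "r \<le> s"
  shows "face_at r (snap r p) t \<notin> active_faces P Or eps r"
proof
  assume active: "face_at r (snap r p) t \<in> active_faces P Or eps r"
  have p: "p \<in> P" "t \<in> signs" using assms(1) by (auto simp: anchored_def)
  show False
  proof (cases "\<forall>j. t $ j \<noteq> 0 \<longrightarrow> \<bar>snap r p $ j - mid j\<bar> = \<alpha> r / 2")
    case True
    then show False
      using preimage_if_centred[OF assms(1,3) active] new by (auto simp: new_faces_def)
  next
    case False
    then obtain i where i: "t $ i \<noteq> 0" "\<bar>snap r p $ i - mid i\<bar> \<noteq> \<alpha> r / 2" by blast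
    obtain q where q: "q \<in> P" "snap r q \<in> face_corners r (snap r p) t" "snap r q $ i \<noteq> snap r p $ i"
      by (rule active_face_at_witness[OF p active i(1)])
    have "snap (Suc s) q \<in> face_corners (Suc s) (snap (Suc s) p) t"
      using snap_face_corners_mono[OF p(1) q(1) p(2) q(2)] assms(3) by simp
    then have "q \<in> face_points"
      using q(1) assms(1) face_at_inter_grid[OF snap_in_grid[OF p(1)] p(2)]
      by (auto simp: face_points_def anchored_def)
    moreover have "profile q < profile p"
      using profile_less[OF assms(1) q(1,2) _ i(1) q(3) i(2)] assms(3) by simp
    ultimately show False using assms(2) by blast
  qed
qed

lemma exists_fresh_anchor:
  obtains p t where "anchored p t" "\<forall>r\<le>s. face_at r (snap r p) t \<notin> active_faces P Or eps r"
proof -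
  let ?p = "arg_min_on profile face_points"
  have act: "box_face c m \<in> active_faces P Or eps (Suc s)" using new by (simp add: new_faces_def)
  have "finite face_points" using finite_P by (simp add: face_points_def)
  moreover have "face_points \<noteq> {}" using active_face_nonempty[OF act] by (auto simp: face_points_def)
  ultimately have p: "?p \<in> face_points" and p_min: "\<not> (\<exists>q\<in>face_points. profile q < profile ?p)"
    by (rule arg_min_if_finite)+
  then obtain t where "t \<in> signs" "box_face c m = face_at (Suc s) (snap (Suc s) ?p) t"
    using active_face_eq_face_at[OF act] by (auto simp: face_points_def)
  then have "anchored ?p t" using p by (simp add: anchored_def face_points_def)
  then show ?thesis using that not_active_if_profile_min[OF _ p_min] by blast
qed

end

context tower
begin

lemma new_face_fresh_anchor:
  assumes "F \<in> new_faces P Or eps s"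
  obtains p t where "p \<in> P" "t \<in> signs" "F = face_at (Suc s) (snap (Suc s) p) t"
    "\<forall>r\<le>s. face_at r (snap r p) t \<notin> active_faces P Or eps r"
proof -
  obtain c m where "c \<in> G (Suc s)" "\<forall>j. m $ j = 0 \<or> m $ j = \<alpha> (Suc s)" "F = box_face c m"
    using assms by (auto simp: new_faces_def active_faces_def spanned_def)
  then interpret new_face P Or eps s c m
    using assms by unfold_locales simp_all
  obtain p t where "anchored p t" "\<forall>r\<le>s. face_at r (snap r p) t \<notin> active_faces P Or eps r"
    by (rule exists_fresh_anchor)
  then show ?thesis using that \<open>F = box_face c m\<close> by (auto simp: anchored_def)
qed

fun born_faces :: "nat \<Rightarrow> (real^'d) set set" where
  "born_faces 0 = active_faces P Or eps 0"
| "born_faces (Suc s) = new_faces P Or eps s"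

definition first_active :: "real^'d \<Rightarrow> real^'d \<Rightarrow> nat" where
  "first_active p t = (LEAST r. face_at r (snap r p) t \<in> active_faces P Or eps r)"

lemma born_face_witness:
  assumes "F \<in> born_faces r"
  obtains p t where "p \<in> P" "t \<in> signs" "first_active p t = r" "F = face_at r (snap r p) t"
proof (cases r)
  case 0
  then have F: "F \<in> active_faces P Or eps 0" using assms by simp
  then obtain p where p: "p \<in> P" "snap 0 p \<in> F" using active_face_nonempty by blast
  then obtain t where "t \<in> signs" "F = face_at 0 (snap 0 p) t"
    using active_face_eq_face_at[OF F] by blast
  moreover have "first_active p t = 0"
    using F calculation by (simp add: first_active_def)
  ultimately show ?thesis using that p 0 by blast
next
  case (Suc s)
  then have F: "F \<in> new_faces P Or eps s" using assms by simp
  then obtain p t where pt: "p \<in> P" "t \<in> signs" "F = face_at (Suc s) (snap (Suc s) p) t"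
    and fresh: "\<forall>r'\<le>s. face_at r' (snap r' p) t \<notin> active_faces P Or eps r'"
    by (rule new_face_fresh_anchor)
  have "first_active p t = Suc s"
    unfolding first_active_def
  proof (rule Least_equality)
    show "face_at (Suc s) (snap (Suc s) p) t \<in> active_faces P Or eps (Suc s)"
      using F pt(3) by (simp add: new_faces_def)
  qed (use fresh not_less_eq_eq in blast)
  then show ?thesis using that pt Suc by blast
qed

lemma born_faces_card_le: "(\<Sum>r<N. card (born_faces r)) \<le> card P * 3 ^ CARD('d)"
proof -
  define \<phi> where "\<phi> = (\<lambda>(p, t). (first_active p t, face_at (first_active p t) (snap (first_active p t) p) t))"
  have fin: "finite (P \<times> (signs :: (real^'d) set))" by (rule finite_cartesian_product[OF finite_P finite_signs])
  have sub: "(SIGMA r:{..<N}. born_faces r) \<subseteq> \<phi> ` (P \<times> signs)"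
  proof clarify
    fix r F assume "F \<in> born_faces r"
    then obtain p t where "p \<in> P" "t \<in> signs" "first_active p t = r" "F = face_at r (snap r p) t"
      by (rule born_face_witness)
    then show "(r, F) \<in> \<phi> ` (P \<times> signs)" by (force simp: \<phi>_def)
  qed
  have finB: "finite (SIGMA r:{..<N}. born_faces r)"
    by (rule finite_subset[OF sub finite_imageI[OF fin]])
  have "finite (born_faces r)" if "r < N" for r
  proof (rule finite_subset[OF _ finite_imageI[OF finB, of snd]])
    show "born_faces r \<subseteq> snd ` (SIGMA r:{..<N}. born_faces r)" using that by force
  qed
  then have "(\<Sum>r<N. card (born_faces r)) = card (SIGMA r:{..<N}. born_faces r)"
    by simp
  also have "\<dots> \<le> card (\<phi> ` (P \<times> signs))" using sub fin by (intro card_mono) auto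
  also have "\<dots> \<le> card (P \<times> (signs :: (real^'d) set))" using fin by (rule card_image_le)
  also have "\<dots> = card P * 3 ^ CARD('d)" by (simp add: card_cartesian_product card_signs)
  finally show ?thesis .
qed

end

theorem lemma13:
  fixes P :: "(real^'d) set" and Or eps :: "nat \<Rightarrow> real^'d" and N :: nat
  assumes "finite P" and "card P \<ge> 2"
    and "\<forall>s. Or s \<in> grid P Or eps s"
    and "\<forall>s j. eps s $ j = 1 \<or> eps s $ j = -1"
    and "\<forall>s. \<forall>p\<in>P. \<exists>!c. c \<in> grid P Or eps s \<and> p \<in> vcell (alph P s) c"
  shows "card (active_faces P Or eps 0) + (\<Sum>s<N. card (new_faces P Or eps s))
           \<le> card P * 3 ^ CARD('d)"
proof -
  interpret tower P Or eps using assms by unfold_locales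
  have "card (active_faces P Or eps 0) + (\<Sum>s<N. card (new_faces P Or eps s)) =
      (\<Sum>r<Suc N. card (born_faces r))"
    by (subst sum.lessThan_Suc_shift) simp
  then show ?thesis using born_faces_card_le[of "Suc N"] by simp
qed

end
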